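(* Assume the density matrices $\rho_1,\dots,\rho_n$ are linearly independent over $\mathbb{R}$, i.e. there is no nonzero $c\in\mathbb{R}^n$ with $\sum_xc_x\rho_x=0$. Then for every $\lambda\ge0$ the function $p\mapsto\chi(p)-\lambda s^Tp$ is strictly concave on $\Delta_n$, and hence has a unique maximizer $p^*$ on $\Delta_n$ (in particular, for $\lambda=0$, the Holevo quantity $\chi$ has a unique maximizer on $\Delta_n$).
   Context: Density matrices $\rho_1,\dots,\rho_n\in\mathcal{D}^m$ ($m\times m$ complex positive semidefinite, trace one); $\Delta_n$ the probability simplex in $\mathbb{R}^n$; $s\in\mathbb{R}^n$, $s\ge0$. For $p\in\Delta_n$, $\rho_p=\sum_xp_x\rho_x$, $H(\rho)=-\operatorname{Tr}[\rho\ln\rho]$ (convention $0\ln0=0$), $\chi(p)=H(\rho_p)-\sum_xp_xH(\rho_x)$. *)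

theory Defs
  imports Jordan_Normal_Form.Char_Poly Jordan_Normal_Form.Schur_Decomposition
begin

definition density :: "nat \<Rightarrow> complex mat \<Rightarrow> bool" where
  "density m A \<longleftrightarrow> A \<in> carrier_mat m m \<and> mat_adjoint A = A \<and>
     (\<forall>v \<in> carrier_vec m. 0 \<le> Re (conjugate v \<bullet> (A *\<^sub>v v))) \<and> (\<Sum>i<m. A $$ (i,i)) = 1"

(* von Neumann entropy  H(A) = - Tr[A ln A] = - sum over eigenvalues (with multiplicity)
   of lambda * ln lambda; the term for lambda = 0 is 0 (convention 0 ln 0 = 0, automatic
   here since 0 * _ = 0) *)
definition vn_entropy :: "complex mat \<Rightarrow> real" where
  "vn_entropy A = - (\<Sum>l\<in>#proots (char_poly A). Re l * ln (Re l))"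

definition mix :: "nat \<Rightarrow> ('n::finite \<Rightarrow> complex mat) \<Rightarrow> ('n \<Rightarrow> real) \<Rightarrow> complex mat" where
  "mix m \<rho> p = mat m m (\<lambda>(i,j). \<Sum>x\<in>UNIV. complex_of_real (p x) * (\<rho> x $$ (i,j)))"

definition holevo :: "nat \<Rightarrow> ('n::finite \<Rightarrow> complex mat) \<Rightarrow> ('n \<Rightarrow> real) \<Rightarrow> real" where
  "holevo m \<rho> p = vn_entropy (mix m \<rho> p) - (\<Sum>x\<in>UNIV. p x * vn_entropy (\<rho> x))"

definition simplex :: "('n::finite \<Rightarrow> real) set" where
  "simplex = {p. (\<forall>x. 0 \<le> p x) \<and> (\<Sum>x\<in>UNIV. p x) = 1}"

definition strict_concave_on :: "('n \<Rightarrow> real) set \<Rightarrow> (('n \<Rightarrow> real) \<Rightarrow> real) \<Rightarrow> bool" where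
  "strict_concave_on S f \<longleftrightarrow> (\<forall>p\<in>S. \<forall>q\<in>S. p \<noteq> q \<longrightarrow> (\<forall>t::real. 0 < t \<and> t < 1 \<longrightarrow>
      t * f p + (1 - t) * f q < f (\<lambda>x. t * p x + (1 - t) * q x)))"

end

theory Submission
  imports Defs
begin

text \<open>For a Hermitian positive semidefinite matrix \<open>A\<close> with eigenbasis \<open>u\<close> and any orthonormal
  basis \<open>e\<close>, the weights \<open>|\<langle>u\<^sub>j, e\<^sub>k\<rangle>|\<^sup>2\<close> form a doubly stochastic matrix, so Jensen's
  inequality for \<open>\<eta>(x) = -x ln x\<close> gives \<open>H(A) \<le> \<Sum>\<^sub>k \<eta>(\<langle>e\<^sub>k, A e\<^sub>k\<rangle>)\<close>, with equality only if
  \<open>e\<close> is an eigenbasis of \<open>A\<close>.  Evaluating this bound for \<open>A\<close> and \<open>B\<close> in an eigenbasis of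
  \<open>t A + (1 - t) B\<close> and using strict concavity of \<open>\<eta>\<close> shows that \<open>H\<close> is strictly concave along
  the segment unless \<open>A\<close> and \<open>B\<close> share an eigenbasis with the same eigenvalues, i.e. \<open>A = B\<close>.
  Linear independence of the \<open>\<rho>\<^sub>x\<close> makes \<open>p \<mapsto> \<rho>\<^sub>p\<close> injective, and the remaining terms of
  the objective are linear in \<open>p\<close>; this gives strict concavity and hence uniqueness of a
  maximizer.  The same bound, taken in an eigenbasis of \<open>\<rho>\<^sub>p\<close>, is a continuous majorant of
  \<open>q \<mapsto> H(\<rho>\<^sub>q)\<close> that is tight at \<open>p\<close>; so the objective is upper semicontinuous on the
  compact simplex and attains its maximum.\<close>

section \<open>The function \<open>\<eta>(x) = -x ln x\<close>\<close>

definition eta :: "real \<Rightarrow> real" where "eta x = - (x * ln x)"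

lemma ln_less_minus_one: "0 < x \<Longrightarrow> x \<noteq> 1 \<Longrightarrow> ln x < x - 1"
  for x :: real
  using ln_le_minus_one ln_eq_minus_one by force

lemma eta_less_tangent:
  assumes "0 \<le> x" "0 < y" "x \<noteq> y"
  shows "eta x < eta y - (1 + ln y) * (x - y)"
proof (cases "x = 0")
  case True
  with assms show ?thesis by (simp add: eta_def algebra_simps)
next
  case False
  with assms have x: "0 < x" by simp
  have "ln (y / x) < y / x - 1"
    using assms x by (intro ln_less_minus_one) auto
  hence "x * (ln y - ln x) < y - x"
    using x assms by (simp add: ln_div field_simps)
  thus ?thesis by (simp add: eta_def algebra_simps)
qed

lemma eta_le_tangent:
  assumes "0 \<le> x" "0 < y"
  shows "eta x \<le> eta y - (1 + ln y) * (x - y)"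
  using eta_less_tangent[OF assms] by (cases "x = y") auto

lemma weighted_sum_affine:
  fixes w a :: "'a \<Rightarrow> real"
  assumes "(\<Sum>j\<in>J. w j) = 1"
  shows "(\<Sum>j\<in>J. w j * (c - d * (a j - mu))) = c - d * ((\<Sum>j\<in>J. w j * a j) - mu)"
proof -
  have "(\<Sum>j\<in>J. w j * (c - d * (a j - mu))) = (\<Sum>j\<in>J. c * w j - d * (w j * a j - mu * w j))"
    by (rule sum.cong) (simp_all add: algebra_simps)
  also have "\<dots> = c * (\<Sum>j\<in>J. w j) - d * ((\<Sum>j\<in>J. w j * a j) - mu * (\<Sum>j\<in>J. w j))"
    by (simp add: sum_subtractf sum_distrib_left[symmetric])
  finally show ?thesis using assms by simp
qed

lemma eta_jensen:
  assumes "finite J" and w: "\<And>j. j \<in> J \<Longrightarrow> 0 \<le> w j" "(\<Sum>j\<in>J. w j) = 1"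
    and a: "\<And>j. j \<in> J \<Longrightarrow> 0 \<le> a j"
  shows "(\<Sum>j\<in>J. w j * eta (a j)) \<le> eta (\<Sum>j\<in>J. w j * a j)"
proof (cases "(\<Sum>j\<in>J. w j * a j) = 0")
  case True
  hence "\<forall>j\<in>J. w j * a j = 0"
    using assms by (subst sum_nonneg_eq_0_iff[symmetric]) auto
  hence "(\<Sum>j\<in>J. w j * eta (a j)) = 0" by (intro sum.neutral) (auto simp: eta_def)
  with True show ?thesis by (simp add: eta_def)
next
  case False
  let ?mu = "\<Sum>j\<in>J. w j * a j"
  have mu: "0 < ?mu" using False assms by (simp add: order.not_eq_order_implies_strict sum_nonneg)
  have "(\<Sum>j\<in>J. w j * eta (a j)) \<le> (\<Sum>j\<in>J. w j * (eta ?mu - (1 + ln ?mu) * (a j - ?mu)))"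
    using eta_le_tangent[OF a mu] w by (intro sum_mono mult_left_mono) auto
  also have "\<dots> = eta ?mu" by (simp add: weighted_sum_affine[OF w(2)])
  finally show ?thesis .
qed

lemma eta_jensen_strict:
  assumes "finite J" and w: "\<And>j. j \<in> J \<Longrightarrow> 0 \<le> w j" "(\<Sum>j\<in>J. w j) = 1"
    and a: "\<And>j. j \<in> J \<Longrightarrow> 0 \<le> a j"
    and k: "k \<in> J" "w k \<noteq> 0" "a k \<noteq> (\<Sum>j\<in>J. w j * a j)"
  shows "(\<Sum>j\<in>J. w j * eta (a j)) < eta (\<Sum>j\<in>J. w j * a j)"
proof -
  let ?mu = "\<Sum>j\<in>J. w j * a j"
  have wk: "0 < w k" using w(1)[OF k(1)] k(2) by simp
  have "0 \<le> ?mu" using assms by (simp add: sum_nonneg)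
  moreover have "?mu \<noteq> 0"
  proof
    assume "?mu = 0"
    hence "w k * a k = 0" using assms by (subst (asm) sum_nonneg_eq_0_iff) auto
    thus False using wk k(3) \<open>?mu = 0\<close> by simp
  qed
  ultimately have mu: "0 < ?mu" by simp
  have le: "\<And>j. j \<in> J \<Longrightarrow> w j * eta (a j) \<le> w j * (eta ?mu - (1 + ln ?mu) * (a j - ?mu))"
    using eta_le_tangent[OF a mu] w by (intro mult_left_mono) auto
  have "w k * eta (a k) < w k * (eta ?mu - (1 + ln ?mu) * (a k - ?mu))"
    using eta_less_tangent[OF a[OF k(1)] mu k(3)] wk by simp
  hence "(\<Sum>j\<in>J. w j * eta (a j)) < (\<Sum>j\<in>J. w j * (eta ?mu - (1 + ln ?mu) * (a j - ?mu)))"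
    using le k(1) by (intro sum_strict_mono_ex1[OF \<open>finite J\<close>]) auto
  also have "\<dots> = eta ?mu" by (simp add: weighted_sum_affine[OF w(2)])
  finally show ?thesis .
qed

lemma eta_concave:
  assumes "0 \<le> t" "t \<le> 1" "0 \<le> a" "0 \<le> b"
  shows "t * eta a + (1 - t) * eta b \<le> eta (t * a + (1 - t) * b)"
  using eta_jensen[of UNIV "\<lambda>j. if j then t else 1 - t" "\<lambda>j. if j then a else b"] assms
  by (simp add: UNIV_bool add.commute)

lemma eta_strictly_concave:
  assumes "0 < t" "t < 1" "0 \<le> a" "0 \<le> b" "a \<noteq> b"
  shows "t * eta a + (1 - t) * eta b < eta (t * a + (1 - t) * b)"
proof -
  have "a \<noteq> t * a + (1 - t) * b"
  proof
    assume "a = t * a + (1 - t) * b"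
    hence "(1 - t) * (a - b) = 0" by (simp add: algebra_simps)
    thus False using assms by simp
  qed
  thus ?thesis
    using eta_jensen_strict[of UNIV "\<lambda>j. if j then t else 1 - t" "\<lambda>j. if j then a else b" True] assms
    by (simp add: UNIV_bool add.commute)
qed

lemma sum_eta_concave_eq_imp_eq:
  assumes "finite K" "0 < t" "t < 1" "\<And>k. k \<in> K \<Longrightarrow> 0 \<le> a k" "\<And>k. k \<in> K \<Longrightarrow> 0 \<le> b k"
    and eq: "(\<Sum>k\<in>K. t * eta (a k) + (1 - t) * eta (b k)) = (\<Sum>k\<in>K. eta (t * a k + (1 - t) * b k))"
    and "k \<in> K"
  shows "a k = b k"
proof (rule ccontr)
  assume "a k \<noteq> b k"
  hence "t * eta (a k) + (1 - t) * eta (b k) < eta (t * a k + (1 - t) * b k)"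
    using assms by (intro eta_strictly_concave) auto
  hence "(\<Sum>k\<in>K. t * eta (a k) + (1 - t) * eta (b k)) < (\<Sum>k\<in>K. eta (t * a k + (1 - t) * b k))"
    using assms by (intro sum_strict_mono_ex1) (auto intro: eta_concave)
  thus False using eq by simp
qed

lemma abs_eta_le_sqrt:
  assumes "0 \<le> x" "x \<le> 1"
  shows "\<bar>eta x\<bar> \<le> 2 * sqrt x"
proof (cases "x = 0")
  case True then show ?thesis by (simp add: eta_def)
next
  case False
  with assms have x: "0 < x" by simp
  have "ln (1 / sqrt x) \<le> 1 / sqrt x - 1" using x by (intro ln_le_minus_one) simp
  hence "- ln x \<le> 2 / sqrt x" using x by (simp add: ln_div ln_sqrt)
  hence "x * (- ln x) \<le> x * (2 / sqrt x)" using x by (intro mult_left_mono) auto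
  also have "x * (2 / sqrt x) = 2 * sqrt x" using x by (simp add: field_simps)
  finally have "eta x \<le> 2 * sqrt x" by (simp add: eta_def)
  moreover have "0 \<le> eta x" using assms x by (simp add: eta_def mult_nonneg_nonpos)
  ultimately show ?thesis by simp
qed

lemma tendsto_eta:
  assumes "\<And>n. 0 \<le> y n" "y \<longlonglongrightarrow> c"
  shows "(\<lambda>n. eta (y n)) \<longlonglongrightarrow> eta c"
proof (cases "c = 0")
  case False
  have "(\<lambda>n. - (y n * ln (y n))) \<longlonglongrightarrow> - (c * ln c)"
    by (intro tendsto_intros assms False)
  thus ?thesis unfolding eta_def .
next
  case True
  have "(\<lambda>n. 2 * sqrt (y n)) \<longlonglongrightarrow> 2 * sqrt c"
    by (intro tendsto_intros assms)
  hence sqrt: "(\<lambda>n. 2 * sqrt (y n)) \<longlonglongrightarrow> 0" using True by simp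
  have "eventually (\<lambda>n. y n < 1) sequentially"
    using assms(2) True by (auto dest: order_tendstoD(2)[of _ _ _ 1])
  hence "eventually (\<lambda>n. norm (eta (y n)) \<le> norm (2 * sqrt (y n)) * 1) sequentially"
    by eventually_elim (use assms(1) abs_eta_le_sqrt in auto)
  hence "(\<lambda>n. eta (y n)) \<longlonglongrightarrow> 0" by (rule tendsto_0_le[OF sqrt])
  thus ?thesis using True by (simp add: eta_def)
qed

section \<open>Vectors and Hermitian matrices\<close>

text \<open>Vectors of length \<open>n\<close> are modelled as functions \<open>nat \<Rightarrow> complex\<close> of which only the
  values below \<open>n\<close> matter; this avoids dimension bookkeeping for the many vectors built below.\<close>

definition cinner :: "nat \<Rightarrow> (nat \<Rightarrow> complex) \<Rightarrow> (nat \<Rightarrow> complex) \<Rightarrow> complex" where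
  "cinner n f g = (\<Sum>i<n. cnj (f i) * g i)"

definition matvec :: "nat \<Rightarrow> complex mat \<Rightarrow> (nat \<Rightarrow> complex) \<Rightarrow> nat \<Rightarrow> complex" where
  "matvec n A f = (\<lambda>i. \<Sum>j<n. A $$ (i,j) * f j)"

definition quad_form :: "nat \<Rightarrow> complex mat \<Rightarrow> (nat \<Rightarrow> complex) \<Rightarrow> real" where
  "quad_form n A f = Re (cinner n f (matvec n A f))"

definition hermitian :: "nat \<Rightarrow> complex mat \<Rightarrow> bool" where
  "hermitian n A \<longleftrightarrow> (\<forall>i<n. \<forall>j<n. A $$ (i,j) = cnj (A $$ (j,i)))"

definition psd :: "nat \<Rightarrow> complex mat \<Rightarrow> bool" where
  "psd n A \<longleftrightarrow> (\<forall>f. 0 \<le> quad_form n A f)"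

definition orthonormal :: "nat \<Rightarrow> (nat \<Rightarrow> nat \<Rightarrow> complex) \<Rightarrow> bool" where
  "orthonormal n u \<longleftrightarrow> (\<forall>k<n. \<forall>l<n. cinner n (u k) (u l) = (if k = l then 1 else 0))"

definition eigenbasis :: "nat \<Rightarrow> complex mat \<Rightarrow> (nat \<Rightarrow> nat \<Rightarrow> complex) \<Rightarrow> (nat \<Rightarrow> real) \<Rightarrow> bool" where
  "eigenbasis n A u d \<longleftrightarrow>
     orthonormal n u \<and> (\<forall>k<n. \<forall>i<n. matvec n A (u k) i = of_real (d k) * u k i)"

lemma cnj_cinner: "cnj (cinner n f g) = cinner n g f"
  unfolding cinner_def by (simp add: mult.commute)

lemma cinner_sum_right: "cinner n f (\<lambda>i. \<Sum>l\<in>L. c l * g l i) = (\<Sum>l\<in>L. c l * cinner n f (g l))"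
proof -
  have "cinner n f (\<lambda>i. \<Sum>l\<in>L. c l * g l i) = (\<Sum>i<n. \<Sum>l\<in>L. c l * (cnj (f i) * g l i))"
    unfolding cinner_def by (simp add: sum_distrib_left mult.left_commute)
  also have "\<dots> = (\<Sum>l\<in>L. c l * cinner n f (g l))"
    unfolding cinner_def by (subst sum.swap) (simp add: sum_distrib_left)
  finally show ?thesis .
qed

lemma cinner_sum_left: "cinner n (\<lambda>i. \<Sum>l\<in>L. c l * g l i) f = (\<Sum>l\<in>L. cnj (c l) * cinner n (g l) f)"
proof -
  have "cinner n (\<lambda>i. \<Sum>l\<in>L. c l * g l i) f = cnj (cinner n f (\<lambda>i. \<Sum>l\<in>L. c l * g l i))"
    by (simp add: cnj_cinner)
  also have "\<dots> = (\<Sum>l\<in>L. cnj (c l) * cinner n (g l) f)"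
    by (simp add: cinner_sum_right cnj_cinner)
  finally show ?thesis .
qed

lemma cinner_scale_right: "cinner n f (\<lambda>i. c * g i) = c * cinner n f g"
  unfolding cinner_def by (simp add: sum_distrib_left algebra_simps)

lemma cinner_scale_left: "cinner n (\<lambda>i. c * g i) f = cnj c * cinner n g f"
  unfolding cinner_def by (simp add: sum_distrib_left algebra_simps)

lemma cinner_cong:
  "(\<And>i. i < n \<Longrightarrow> f i = f' i) \<Longrightarrow> (\<And>i. i < n \<Longrightarrow> g i = g' i) \<Longrightarrow> cinner n f g = cinner n f' g'"
  unfolding cinner_def by (intro sum.cong) auto

lemma cinner_self: "cinner n f f = of_real (\<Sum>i<n. (cmod (f i))\<^sup>2)"
  unfolding cinner_def of_real_sum by (intro sum.cong refl) (metis complex_norm_square mult.commute)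

lemma matvec_cong: "(\<And>i. i < n \<Longrightarrow> f i = f' i) \<Longrightarrow> matvec n A f i = matvec n A f' i"
  unfolding matvec_def by (intro sum.cong) auto

lemma matvec_sum: "matvec n A (\<lambda>i. \<Sum>l\<in>L. c l * g l i) j = (\<Sum>l\<in>L. c l * matvec n A (g l) j)"
proof -
  have "matvec n A (\<lambda>i. \<Sum>l\<in>L. c l * g l i) j = (\<Sum>i<n. \<Sum>l\<in>L. c l * (A $$ (j,i) * g l i))"
    unfolding matvec_def by (simp add: sum_distrib_left mult.left_commute)
  also have "\<dots> = (\<Sum>l\<in>L. c l * matvec n A (g l) j)"
    unfolding matvec_def by (subst sum.swap) (simp add: sum_distrib_left)
  finally show ?thesis .
qed

lemma matvec_scale: "matvec n A (\<lambda>i. c * g i) j = c * matvec n A g j"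
  unfolding matvec_def by (simp add: sum_distrib_left algebra_simps)

lemma matvec_vec:
  assumes "A \<in> carrier_mat n n" "v \<in> carrier_vec n" "i < n"
  shows "matvec n A (\<lambda>j. v $ j) i = (A *\<^sub>v v) $ i"
  using assms unfolding matvec_def by (simp add: scalar_prod_def lessThan_atLeast0)

lemma hermitian_cinner_matvec:
  assumes "hermitian n A"
  shows "cinner n f (matvec n A g) = cinner n (matvec n A f) g"
proof -
  have "cinner n f (matvec n A g) = (\<Sum>i<n. \<Sum>j<n. cnj (f i) * A $$ (i,j) * g j)"
    unfolding cinner_def matvec_def by (simp add: sum_distrib_left algebra_simps)
  also have "\<dots> = (\<Sum>j<n. \<Sum>i<n. cnj (f i) * A $$ (i,j) * g j)"
    by (rule sum.swap)
  also have "\<dots> = (\<Sum>j<n. \<Sum>i<n. cnj (A $$ (j,i) * f i) * g j)"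
  proof (intro sum.cong refl)
    fix i j assume "i \<in> {..<n}" "j \<in> {..<n}"
    hence "A $$ (i,j) = cnj (A $$ (j,i))" using assms unfolding hermitian_def by blast
    thus "cnj (f i) * A $$ (i,j) * g j = cnj (A $$ (j,i) * f i) * g j" by simp
  qed
  also have "\<dots> = cinner n (matvec n A f) g"
    unfolding cinner_def matvec_def by (simp add: sum_distrib_right)
  finally show ?thesis .
qed

lemma hermitian_cinner_matvec_real:
  assumes "hermitian n A"
  shows "cinner n f (matvec n A f) = of_real (quad_form n A f)"
proof -
  have real: "z = of_real (Re z)" if "cnj z = z" for z :: complex
    using that by (simp add: complex_eq_iff)
  have "cnj (cinner n f (matvec n A f)) = cinner n f (matvec n A f)"
    using hermitian_cinner_matvec[OF assms] by (simp add: cnj_cinner)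
  thus ?thesis unfolding quad_form_def by (rule real)
qed

lemma orthonormal_unitary:
  assumes "orthonormal n u"
  defines "W \<equiv> mat n n (\<lambda>(i,k). u k i)" and "W' \<equiv> mat n n (\<lambda>(k,i). cnj (u k i))"
  shows "W' * W = 1\<^sub>m n" and "W * W' = 1\<^sub>m n"
proof -
  have W: "W \<in> carrier_mat n n" and W': "W' \<in> carrier_mat n n" unfolding W_def W'_def by auto
  show W'W: "W' * W = 1\<^sub>m n"
  proof (rule eq_matI)
    fix k l assume "k < dim_row (1\<^sub>m n :: complex mat)" "l < dim_col (1\<^sub>m n :: complex mat)"
    hence "k < n" "l < n" by auto
    hence "(W' * W) $$ (k,l) = cinner n (u k) (u l)"
      unfolding W_def W'_def cinner_def by (simp add: scalar_prod_def lessThan_atLeast0)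
    thus "(W' * W) $$ (k,l) = 1\<^sub>m n $$ (k,l)" using assms \<open>k < n\<close> \<open>l < n\<close> unfolding orthonormal_def by simp
  qed (use W W' in auto)
  thus "W * W' = 1\<^sub>m n" using mat_mult_left_right_inverse[OF W' W] by simp
qed

lemma orthonormal_complete:
  assumes "orthonormal n u" "i < n" "j < n"
  shows "(\<Sum>k<n. u k i * cnj (u k j)) = (if i = j then 1 else 0)"
proof -
  have "(\<Sum>k<n. u k i * cnj (u k j)) = (mat n n (\<lambda>(i,k). u k i) * mat n n (\<lambda>(k,i). cnj (u k i))) $$ (i,j)"
    using assms(2,3) by (simp add: scalar_prod_def lessThan_atLeast0)
  thus ?thesis using orthonormal_unitary(2)[OF assms(1)] assms(2,3) by simp
qed

lemma orthonormal_expand: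
  assumes "orthonormal n u" "i < n"
  shows "f i = (\<Sum>k<n. cinner n (u k) f * u k i)"
proof -
  have "(\<Sum>k<n. cinner n (u k) f * u k i) = (\<Sum>k<n. \<Sum>j<n. u k i * cnj (u k j) * f j)"
    unfolding cinner_def by (simp add: sum_distrib_left sum_distrib_right algebra_simps)
  also have "\<dots> = (\<Sum>j<n. (\<Sum>k<n. u k i * cnj (u k j)) * f j)"
    by (subst sum.swap) (simp add: sum_distrib_right)
  also have "\<dots> = (\<Sum>j<n. if i = j then f j else 0)"
    using orthonormal_complete[OF assms(1) assms(2)] by (intro sum.cong refl) simp
  finally show ?thesis using assms(2) by simp
qed

lemma parseval:
  assumes "orthonormal n u"
  shows "Re (cinner n f f) = (\<Sum>k<n. (cmod (cinner n (u k) f))\<^sup>2)"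
proof -
  have "cinner n f f = cinner n f (\<lambda>i. \<Sum>k<n. cinner n (u k) f * u k i)"
    by (rule cinner_cong) (use orthonormal_expand[OF assms] in auto)
  also have "\<dots> = (\<Sum>k<n. of_real ((cmod (cinner n (u k) f))\<^sup>2))"
    unfolding cinner_sum_right by (intro sum.cong refl) (metis cnj_cinner complex_norm_square)
  finally show ?thesis by (simp only: Re_sum) simp
qed

lemma mat_entry_expand:
  assumes "orthonormal n u" "i < n" "j < n"
  shows "A $$ (i,j) = (\<Sum>k<n. matvec n A (u k) i * cnj (u k j))"
proof -
  have "(\<Sum>k<n. matvec n A (u k) i * cnj (u k j)) = (\<Sum>k<n. \<Sum>l<n. A $$ (i,l) * (u k l * cnj (u k j)))"
    unfolding matvec_def by (intro sum.cong refl) (simp add: sum_distrib_right mult.assoc)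
  also have "\<dots> = (\<Sum>l<n. A $$ (i,l) * (\<Sum>k<n. u k l * cnj (u k j)))"
    by (subst sum.swap) (simp add: sum_distrib_left)
  also have "\<dots> = (\<Sum>l<n. if l = j then A $$ (i,l) else 0)"
    using orthonormal_complete[OF assms(1) _ assms(3)] by (intro sum.cong refl) simp
  finally show ?thesis using assms(3) by simp
qed

lemma eq_if_same_eigenbasis:
  assumes "A \<in> carrier_mat n n" "B \<in> carrier_mat n n" "eigenbasis n A u d" "eigenbasis n B u d"
  shows "A = B"
proof (rule eq_matI)
  fix i j assume "i < dim_row B" "j < dim_col B"
  hence ij: "i < n" "j < n" using assms by auto
  have u: "orthonormal n u" using assms unfolding eigenbasis_def by simp
  have "(\<Sum>k<n. matvec n A (u k) i * cnj (u k j)) = (\<Sum>k<n. matvec n B (u k) i * cnj (u k j))"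
    using assms ij unfolding eigenbasis_def by (intro sum.cong refl) simp
  thus "A $$ (i,j) = B $$ (i,j)" using mat_entry_expand[OF u ij] by metis
qed (use assms in auto)

section \<open>Spectral theorem\<close>

lemma orthonormal_normalize:
  assumes "\<forall>k<n. \<forall>l<n. (cinner n (g k) (g l) = 0) = (k \<noteq> l)"
  shows "orthonormal n (\<lambda>k i. of_real (1 / sqrt (Re (cinner n (g k) (g k)))) * g k i)"
  unfolding orthonormal_def
proof (intro allI impI)
  fix k l assume k: "k < n" and l: "l < n"
  define r where "r k = 1 / sqrt (Re (cinner n (g k) (g k)))" for k
  have scale: "cinner n (\<lambda>i. of_real (r k) * g k i) (\<lambda>i. of_real (r l) * g l i) =
      of_real (r k * r l) * cinner n (g k) (g l)"
    by (simp add: cinner_scale_left cinner_scale_right)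
  define S where "S = (\<Sum>i<n. (cmod (g k i))\<^sup>2)"
  have gk: "cinner n (g k) (g k) = of_real S" unfolding S_def by (rule cinner_self)
  moreover have "0 \<le> S" unfolding S_def by (simp add: sum_nonneg)
  ultimately have "0 < S" using assms k by force
  hence "r k * r k * S = 1" unfolding r_def gk by (simp add: field_simps)
  hence "of_real (r k * r k) * cinner n (g k) (g k) = 1" unfolding gk by (metis of_real_1 of_real_mult)
  with scale assms k l show "cinner n (\<lambda>i. of_real (r k) * g k i) (\<lambda>i. of_real (r l) * g l i) =
      (if k = l then 1 else 0)"
    by auto
qed

lemma orthonormal_extend_vector:
  assumes v: "v \<in> carrier_vec n" "v \<noteq> 0\<^sub>v n"
  obtains w c where "orthonormal n w" "w 0 = (\<lambda>i. c * v $ i)"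
proof -
  interpret cof_vec_space n "TYPE(complex)" .
  define b where "b = basis_completion v"
  define ws where "ws = gram_schmidt n b"
  from basis_completion[OF v, folded b_def]
  have b: "set b \<subseteq> carrier_vec n" "distinct b" "\<not> lin_dep (set b)" "length b = n" "hd b = v"
    by auto
  from gram_schmidt_result[OF b(1-3) refl, folded ws_def]
  have ws: "set ws \<subseteq> carrier_vec n" "corthogonal ws" "length ws = n" by (auto simp: b(4))
  obtain vs where "b = v # vs" using b(4,5) v by (cases b) auto
  hence "hd ws = v" unfolding ws_def using gram_schmidt_hd[OF v(1)] by simp
  hence ws0: "ws ! 0 = v" using ws(3) b(4,5) v by (cases ws) auto
  define g where "g k i = ws ! k $ i" for k i
  have "(cinner n (g k) (g l) = 0) = (k \<noteq> l)" if "k < n" "l < n" for k l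
  proof -
    have "ws ! k \<in> carrier_vec n" "ws ! l \<in> carrier_vec n" using ws that by auto
    hence "cinner n (g k) (g l) = ws ! l \<bullet>c ws ! k"
      unfolding g_def cinner_def scalar_prod_def by (simp add: lessThan_atLeast0 mult.commute)
    thus ?thesis using corthogonalD[OF ws(2)] that ws(3) by auto
  qed
  hence "orthonormal n (\<lambda>k i. of_real (1 / sqrt (Re (cinner n (g k) (g k)))) * g k i)"
    by (intro orthonormal_normalize) blast
  moreover have "(\<lambda>i. of_real (1 / sqrt (Re (cinner n (g 0) (g 0)))) * g 0 i) =
      (\<lambda>i. of_real (1 / sqrt (Re (cinner n (g 0) (g 0)))) * v $ i)"
    unfolding g_def ws0 ..
  ultimately show ?thesis using that by blast
qed

lemma hermitian_unit_eigenvector: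
  assumes A: "A \<in> carrier_mat (Suc n) (Suc n)" and herm: "hermitian (Suc n) A"
  obtains w e where "orthonormal (Suc n) w"
    "\<And>i. i < Suc n \<Longrightarrow> matvec (Suc n) A (w 0) i = of_real e * w 0 i"
proof -
  obtain as where "char_poly A = (\<Prod>a\<leftarrow>as. [:- a, 1:])" "length as = Suc n"
    using char_poly_factorized[OF A] by blast
  then obtain e where "poly (char_poly A) e = 0" by (cases as) auto
  hence "eigenvalue A e" using eigenvalue_root_char_poly[OF A] by simp
  then obtain v where "eigenvector A v e" unfolding eigenvalue_def by blast
  hence v: "v \<in> carrier_vec (Suc n)" "v \<noteq> 0\<^sub>v (Suc n)" and Av: "A *\<^sub>v v = e \<cdot>\<^sub>v v"
    unfolding eigenvector_def using A by auto
  obtain w c where w: "orthonormal (Suc n) w" "w 0 = (\<lambda>i. c * v $ i)"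
    using orthonormal_extend_vector[OF v] .
  have eig: "matvec (Suc n) A (w 0) i = e * w 0 i" if "i < Suc n" for i
    using matvec_vec[OF A v(1) that] Av v(1) that unfolding w(2) matvec_scale by simp
  have "cinner (Suc n) (w 0) (matvec (Suc n) A (w 0)) = cinner (Suc n) (w 0) (\<lambda>i. e * w 0 i)"
    by (rule cinner_cong) (simp_all add: eig)
  also have "\<dots> = e" using w(1) by (simp add: cinner_scale_right orthonormal_def)
  finally have "e = of_real (quad_form (Suc n) A (w 0))" using hermitian_cinner_matvec_real[OF herm] by simp
  with eig w(1) show ?thesis using that by metis
qed

text \<open>The matrix of \<open>A\<close> on the orthogonal complement of \<open>w 0\<close>, in the basis \<open>w 1, \<dots>, w n\<close>.\<close>
definition compression :: "nat \<Rightarrow> complex mat \<Rightarrow> (nat \<Rightarrow> nat \<Rightarrow> complex) \<Rightarrow> complex mat" where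
  "compression n A w = mat n n (\<lambda>(i,j). cinner (Suc n) (w (Suc i)) (matvec (Suc n) A (w (Suc j))))"

lemma hermitian_compression:
  assumes "hermitian (Suc n) A"
  shows "hermitian n (compression n A w)"
  unfolding hermitian_def compression_def
  using hermitian_cinner_matvec[OF assms] by (simp add: cnj_cinner)

lemma matvec_compression:
  assumes w: "orthonormal (Suc n) w" and herm: "hermitian (Suc n) A"
    and eig: "\<And>i. i < Suc n \<Longrightarrow> matvec (Suc n) A (w 0) i = of_real e * w 0 i"
    and "l < n" "i < Suc n"
  shows "matvec (Suc n) A (w (Suc l)) i = (\<Sum>r<n. compression n A w $$ (r,l) * w (Suc r) i)"
proof -
  have "cinner (Suc n) (w 0) (matvec (Suc n) A (w (Suc l))) =
      cinner (Suc n) (\<lambda>i. of_real e * w 0 i) (w (Suc l))"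
    unfolding hermitian_cinner_matvec[OF herm] by (rule cinner_cong) (auto simp: eig)
  also have "\<dots> = 0" using w \<open>l < n\<close> unfolding cinner_scale_left orthonormal_def by simp
  finally have "cinner (Suc n) (w 0) (matvec (Suc n) A (w (Suc l))) = 0" .
  thus ?thesis
    using orthonormal_expand[OF w \<open>i < Suc n\<close>, of "matvec (Suc n) A (w (Suc l))"] \<open>l < n\<close>
    unfolding sum.lessThan_Suc_shift compression_def by simp
qed

definition lift_basis :: "nat \<Rightarrow> (nat \<Rightarrow> nat \<Rightarrow> complex) \<Rightarrow> (nat \<Rightarrow> nat \<Rightarrow> complex) \<Rightarrow> nat \<Rightarrow> nat \<Rightarrow> complex"
  where "lift_basis n w u k = (case k of 0 \<Rightarrow> w 0 | Suc k' \<Rightarrow> (\<lambda>i. \<Sum>l<n. u k' l * w (Suc l) i))"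

lemma orthonormal_lift_basis:
  assumes w: "orthonormal (Suc n) w" and u: "orthonormal n u"
  shows "orthonormal (Suc n) (lift_basis n w u)"
proof -
  have ww: "cinner (Suc n) (w a) (w b) = (if a = b then 1 else 0)" if "a < Suc n" "b < Suc n" for a b
    using w that unfolding orthonormal_def by blast
  have zero: "cinner (Suc n) (w 0) (lift_basis n w u (Suc l)) = 0" for l
    unfolding lift_basis_def by (simp add: cinner_sum_right ww)
  hence zero': "cinner (Suc n) (lift_basis n w u (Suc l)) (w 0) = 0" for l
    by (metis cnj_cinner complex_cnj_zero)
  have "cinner (Suc n) (lift_basis n w u (Suc k)) (lift_basis n w u (Suc l)) =
      (\<Sum>a<n. cnj (u k a) * (\<Sum>b<n. u l b * (if a = b then 1 else 0)))" for k l
    unfolding lift_basis_def by (simp add: cinner_sum_left cinner_sum_right ww)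
  also have "\<dots> k l = cinner n (u k) (u l)" for k l
    unfolding cinner_def by (intro sum.cong refl) (simp add: if_distrib cong: if_cong)
  finally have succ: "cinner (Suc n) (lift_basis n w u (Suc k)) (lift_basis n w u (Suc l)) = cinner n (u k) (u l)"
    for k l .
  show ?thesis unfolding orthonormal_def
  proof (intro allI impI)
    fix k l assume "k < Suc n" "l < Suc n"
    thus "cinner (Suc n) (lift_basis n w u k) (lift_basis n w u l) = (if k = l then 1 else 0)"
      using ww[of 0 0] zero zero' succ u
      by (cases k; cases l) (auto simp: lift_basis_def orthonormal_def cnj_cinner)
  qed
qed

lemma eigenbasis_lift_basis:
  assumes w: "orthonormal (Suc n) w" and herm: "hermitian (Suc n) A"
    and eig: "\<And>i. i < Suc n \<Longrightarrow> matvec (Suc n) A (w 0) i = of_real e * w 0 i"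
    and u: "eigenbasis n (compression n A w) u d"
  shows "eigenbasis (Suc n) A (lift_basis n w u) (\<lambda>k. case k of 0 \<Rightarrow> e | Suc k \<Rightarrow> d k)"
proof -
  have "matvec (Suc n) A (lift_basis n w u (Suc k)) i = of_real (d k) * lift_basis n w u (Suc k) i"
    if "k < n" "i < Suc n" for k i
  proof -
    have "matvec (Suc n) A (lift_basis n w u (Suc k)) i = (\<Sum>l<n. u k l * matvec (Suc n) A (w (Suc l)) i)"
      unfolding lift_basis_def using matvec_sum[of "Suc n" A "u k" "\<lambda>l. w (Suc l)" "{..<n}" i] by simp
    also have "\<dots> = (\<Sum>l<n. u k l * (\<Sum>r<n. compression n A w $$ (r,l) * w (Suc r) i))"
      using matvec_compression[OF w herm eig _ that(2)] by simp
    also have "\<dots> = (\<Sum>r<n. \<Sum>l<n. u k l * compression n A w $$ (r,l) * w (Suc r) i)"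
      by (subst sum.swap) (simp add: sum_distrib_left mult.assoc)
    also have "\<dots> = (\<Sum>r<n. matvec n (compression n A w) (u k) r * w (Suc r) i)"
      unfolding matvec_def by (simp add: sum_distrib_left mult_ac)
    also have "\<dots> = (\<Sum>r<n. of_real (d k) * (u k r * w (Suc r) i))"
      using u that unfolding eigenbasis_def by (intro sum.cong refl) simp
    finally show ?thesis unfolding lift_basis_def by (simp add: sum_distrib_left)
  qed
  with eig show ?thesis
    unfolding eigenbasis_def using orthonormal_lift_basis[OF w] u
    by (auto simp: eigenbasis_def lift_basis_def split: nat.split)
qed

theorem hermitian_eigenbasis_exists:
  "A \<in> carrier_mat n n \<Longrightarrow> hermitian n A \<Longrightarrow> \<exists>u d. eigenbasis n A u d"
proof (induction n arbitrary: A)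
  case 0
  show ?case by (simp add: eigenbasis_def orthonormal_def)
next
  case (Suc n)
  obtain w e where w: "orthonormal (Suc n) w"
    and eig: "\<And>i. i < Suc n \<Longrightarrow> matvec (Suc n) A (w 0) i = of_real e * w 0 i"
    using hermitian_unit_eigenvector[OF Suc.prems] by blast
  obtain u d where "eigenbasis n (compression n A w) u d"
    using Suc.IH[of "compression n A w"] hermitian_compression[OF Suc.prems(2)]
    by (auto simp: compression_def)
  from eigenbasis_lift_basis[OF w Suc.prems(2) eig this] show ?case by blast
qed

section \<open>Entropy in orthonormal bases\<close>

lemma proots_linear_prod: "proots (\<Prod>a\<leftarrow>as. [:- a, 1:]) = mset (as :: complex list)"
proof (induction as)
  case (Cons a as)
  have nonzero: "(\<Prod>a\<leftarrow>as. [:- a, 1:]) \<noteq> (0 :: complex poly)" by (auto simp: prod_list_zero_iff)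
  have "(\<Prod>a\<leftarrow>a # as. [:- a, 1:]) = [:- a, 1:] * (\<Prod>a\<leftarrow>as. [:- a, 1:])" by simp
  hence "proots (\<Prod>a\<leftarrow>a # as. [:- a, 1:]) = proots [:- a, 1:] + proots (\<Prod>a\<leftarrow>as. [:- a, 1:])"
    by (simp only:) (rule proots_mult, use nonzero in simp_all)
  also have "proots [:- a, 1:] = {#a#}" using proots_linear_factor[of "-a"] by simp
  finally show ?case using Cons by simp
qed simp

lemma eigenbasis_similar_diag:
  assumes A: "A \<in> carrier_mat n n" and eig: "eigenbasis n A u d"
  shows "similar_mat A (mat n n (\<lambda>(i,j). if i = j then complex_of_real (d i) else 0))"
proof -
  define W where "W = mat n n (\<lambda>(i,k). u k i)"
  define W' where "W' = mat n n (\<lambda>(k,i). cnj (u k i))"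
  define D where "D = mat n n (\<lambda>(i,j). if i = j then complex_of_real (d i) else 0)"
  have u: "orthonormal n u" using eig by (simp add: eigenbasis_def)
  note unitary = orthonormal_unitary[OF u, folded W_def W'_def]
  have W: "W \<in> carrier_mat n n" and W': "W' \<in> carrier_mat n n" and D: "D \<in> carrier_mat n n"
    unfolding W_def W'_def D_def by auto
  have WD: "W * D = mat n n (\<lambda>(i,k). u k i * of_real (d k))"
  proof (rule eq_matI)
    fix i k assume "i < dim_row (mat n n (\<lambda>(i,k). u k i * of_real (d k)))"
      "k < dim_col (mat n n (\<lambda>(i,k). u k i * of_real (d k)))"
    hence ik: "i < n" "k < n" by auto
    have "(W * D) $$ (i,k) = (\<Sum>l<n. u l i * (if l = k then of_real (d l) else 0))"
      using ik unfolding W_def D_def by (simp add: scalar_prod_def lessThan_atLeast0)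
    also have "\<dots> = (\<Sum>l<n. if l = k then u k i * of_real (d k) else 0)"
      by (intro sum.cong refl) auto
    finally show "(W * D) $$ (i,k) = mat n n (\<lambda>(i,k). u k i * of_real (d k)) $$ (i,k)" using ik by simp
  qed (use W D in auto)
  have "A = W * D * W'"
  proof (rule eq_matI)
    fix i j assume "i < dim_row (W * D * W')" "j < dim_col (W * D * W')"
    hence ij: "i < n" "j < n" using W W' by auto
    have "(W * D * W') $$ (i,j) = (\<Sum>k<n. of_real (d k) * u k i * cnj (u k j))"
      using ij unfolding WD W'_def by (simp add: scalar_prod_def lessThan_atLeast0 mult_ac)
    also have "\<dots> = A $$ (i,j)"
      using eig ij unfolding mat_entry_expand[OF u ij] eigenbasis_def by (intro sum.cong refl) simp
    finally show "A $$ (i,j) = (W * D * W') $$ (i,j)" ..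
  qed (use A W D W' in auto)
  with A W W' D unitary show ?thesis
    unfolding similar_mat_def similar_mat_wit_def D_def by (intro exI[of _ W] exI[of _ W']) auto
qed

lemma vn_entropy_eigenbasis:
  assumes "A \<in> carrier_mat n n" "eigenbasis n A u d"
  shows "vn_entropy A = (\<Sum>k<n. eta (d k))"
proof -
  let ?D = "mat n n (\<lambda>(i,j). if i = j then complex_of_real (d i) else 0)"
  have "upper_triangular ?D" unfolding upper_triangular_def by auto
  moreover have "diag_mat ?D = map (\<lambda>i. complex_of_real (d i)) [0..<n]"
    unfolding diag_mat_def by auto
  ultimately have cp: "char_poly A = (\<Prod>a\<leftarrow>map (\<lambda>i. complex_of_real (d i)) [0..<n]. [:- a, 1:])"
    using char_poly_similar[OF eigenbasis_similar_diag[OF assms]] char_poly_upper_triangular[of ?D n]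
    by simp
  have "proots (char_poly A) = mset (map (\<lambda>i. complex_of_real (d i)) [0..<n])"
    unfolding cp by (rule proots_linear_prod)
  thus ?thesis
    unfolding vn_entropy_def eta_def
    by (simp add: image_mset.compositionality o_def sum_unfold_sum_mset[symmetric] sum_negf
        lessThan_atLeast0)
qed

lemma quad_form_eigenbasis:
  assumes "eigenbasis n A u d" "k < n"
  shows "quad_form n A (u k) = d k"
proof -
  have "cinner n (u k) (matvec n A (u k)) = cinner n (u k) (\<lambda>i. of_real (d k) * u k i)"
    using assms by (intro cinner_cong) (auto simp: eigenbasis_def)
  thus ?thesis using assms by (simp add: quad_form_def cinner_scale_right eigenbasis_def orthonormal_def)
qed

lemma eigenbasis_nonneg:
  assumes "eigenbasis n A u d" "psd n A" "k < n"
  shows "0 \<le> d k"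
proof -
  have "0 \<le> quad_form n A (u k)" using assms(2) unfolding psd_def by blast
  thus ?thesis by (simp add: quad_form_eigenbasis[OF assms(1,3)])
qed

lemma matvec_eigenbasis_expand:
  assumes "eigenbasis n A u d" "i < n"
  shows "matvec n A f i = (\<Sum>j<n. (cinner n (u j) f * of_real (d j)) * u j i)"
proof -
  have u: "orthonormal n u" using assms by (simp add: eigenbasis_def)
  have "matvec n A f i = matvec n A (\<lambda>i. \<Sum>j<n. cinner n (u j) f * u j i) i"
    by (rule matvec_cong) (rule orthonormal_expand[OF u])
  also have "\<dots> = (\<Sum>j<n. cinner n (u j) f * matvec n A (u j) i)" by (rule matvec_sum)
  also have "\<dots> = (\<Sum>j<n. (cinner n (u j) f * of_real (d j)) * u j i)"
    using assms by (intro sum.cong refl) (simp add: eigenbasis_def)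
  finally show ?thesis .
qed

lemma quad_form_eigenbasis_expand:
  assumes "eigenbasis n A u d"
  shows "quad_form n A f = (\<Sum>j<n. (cmod (cinner n (u j) f))\<^sup>2 * d j)"
proof -
  have "cinner n f (matvec n A f) = cinner n f (\<lambda>i. \<Sum>j<n. (cinner n (u j) f * of_real (d j)) * u j i)"
    by (rule cinner_cong) (simp_all add: matvec_eigenbasis_expand[OF assms])
  also have "\<dots> = (\<Sum>j<n. of_real ((cmod (cinner n (u j) f))\<^sup>2 * d j))"
    unfolding cinner_sum_right
  proof (intro sum.cong refl)
    fix j
    let ?c = "cinner n (u j) f"
    have "?c * of_real (d j) * cinner n f (u j) = (?c * cnj ?c) * of_real (d j)"
      by (simp add: cnj_cinner mult_ac)
    also have "?c * cnj ?c = of_real ((cmod ?c)\<^sup>2)" by (rule complex_norm_square[symmetric])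
    finally show "?c * of_real (d j) * cinner n f (u j) = of_real ((cmod ?c)\<^sup>2 * d j)" by simp
  qed
  finally show ?thesis unfolding quad_form_def by (simp only: Re_sum) simp
qed

lemma overlap_row_sum:
  assumes "orthonormal n u" "orthonormal n e" "k < n"
  shows "(\<Sum>j<n. (cmod (cinner n (u j) (e k)))\<^sup>2) = 1"
  using parseval[OF assms(1), of "e k"] assms(2,3) unfolding orthonormal_def by simp

lemma overlap_col_sum:
  assumes "orthonormal n u" "orthonormal n e" "j < n"
  shows "(\<Sum>k<n. (cmod (cinner n (u j) (e k)))\<^sup>2) = 1"
proof -
  have "(\<Sum>k<n. (cmod (cinner n (u j) (e k)))\<^sup>2) = (\<Sum>k<n. (cmod (cinner n (e k) (u j)))\<^sup>2)"
  proof (intro sum.cong refl)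
    fix k
    have "cinner n (e k) (u j) = cnj (cinner n (u j) (e k))" by (simp add: cnj_cinner)
    thus "(cmod (cinner n (u j) (e k)))\<^sup>2 = (cmod (cinner n (e k) (u j)))\<^sup>2" by simp
  qed
  also have "\<dots> = Re (cinner n (u j) (u j))" by (rule parseval[OF assms(2), symmetric])
  finally show ?thesis using assms(1,3) unfolding orthonormal_def by simp
qed

lemma vn_entropy_overlap_sum:
  assumes "A \<in> carrier_mat n n" "eigenbasis n A u d" "orthonormal n e"
  shows "vn_entropy A = (\<Sum>k<n. \<Sum>j<n. (cmod (cinner n (u j) (e k)))\<^sup>2 * eta (d j))"
proof -
  have u: "orthonormal n u" using assms by (simp add: eigenbasis_def)
  have "vn_entropy A = (\<Sum>j<n. (\<Sum>k<n. (cmod (cinner n (u j) (e k)))\<^sup>2) * eta (d j))"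
    unfolding vn_entropy_eigenbasis[OF assms(1,2)] by (simp add: overlap_col_sum[OF u assms(3)])
  also have "\<dots> = (\<Sum>j<n. \<Sum>k<n. (cmod (cinner n (u j) (e k)))\<^sup>2 * eta (d j))"
    by (simp add: sum_distrib_right)
  also have "\<dots> = (\<Sum>k<n. \<Sum>j<n. (cmod (cinner n (u j) (e k)))\<^sup>2 * eta (d j))"
    by (rule sum.swap)
  finally show ?thesis .
qed

lemma vn_entropy_le_sum_eta_quad_form:
  assumes A: "A \<in> carrier_mat n n" "hermitian n A" "psd n A" and e: "orthonormal n e"
  shows "vn_entropy A \<le> (\<Sum>k<n. eta (quad_form n A (e k)))"
proof -
  obtain u d where eig: "eigenbasis n A u d" using hermitian_eigenbasis_exists[OF A(1,2)] by blast
  have u: "orthonormal n u" using eig by (simp add: eigenbasis_def)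
  have "(\<Sum>j<n. (cmod (cinner n (u j) (e k)))\<^sup>2 * eta (d j)) \<le> eta (quad_form n A (e k))" if "k < n" for k
    unfolding quad_form_eigenbasis_expand[OF eig]
    by (rule eta_jensen) (simp_all add: overlap_row_sum[OF u e that] eigenbasis_nonneg[OF eig A(3)])
  thus ?thesis unfolding vn_entropy_overlap_sum[OF A(1) eig e] by (intro sum_mono) simp
qed

lemma vn_entropy_eq_sum_eta_quad_form:
  assumes "A \<in> carrier_mat n n" "eigenbasis n A e c"
  shows "vn_entropy A = (\<Sum>k<n. eta (quad_form n A (e k)))"
  unfolding vn_entropy_eigenbasis[OF assms] using quad_form_eigenbasis[OF assms(2)] by simp

text \<open>Equality forces every \<open>e k\<close> to lie in a single eigenspace, by strictness of Jensen.\<close>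
lemma eigenbasis_if_vn_entropy_eq:
  assumes A: "A \<in> carrier_mat n n" "hermitian n A" "psd n A" and e: "orthonormal n e"
    and eq: "vn_entropy A = (\<Sum>k<n. eta (quad_form n A (e k)))"
  shows "eigenbasis n A e (\<lambda>k. quad_form n A (e k))"
proof -
  obtain u d where eig: "eigenbasis n A u d" using hermitian_eigenbasis_exists[OF A(1,2)] by blast
  have u: "orthonormal n u" using eig by (simp add: eigenbasis_def)
  define w where "w k j = (cmod (cinner n (u j) (e k)))\<^sup>2" for k j
  define q where "q k = quad_form n A (e k)" for k
  have q: "q k = (\<Sum>j<n. w k j * d j)" for k
    unfolding q_def w_def by (rule quad_form_eigenbasis_expand[OF eig])
  have jensen: "(\<Sum>j<n. w k j * eta (d j)) \<le> eta (q k)" if "k < n" for k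
    unfolding q w_def
    by (rule eta_jensen) (simp_all add: overlap_row_sum[OF u e that] eigenbasis_nonneg[OF eig A(3)])
  have "(\<Sum>k<n. eta (q k) - (\<Sum>j<n. w k j * eta (d j))) = 0"
    using eq unfolding vn_entropy_overlap_sum[OF A(1) eig e] q_def w_def by (simp add: sum_subtractf)
  hence tight: "(\<Sum>j<n. w k j * eta (d j)) = eta (q k)" if "k < n" for k
    using that jensen by (subst (asm) sum_nonneg_eq_0_iff) auto
  have same: "d j = q k" if "k < n" "j < n" "w k j \<noteq> 0" for k j
  proof (rule ccontr)
    assume "d j \<noteq> q k"
    hence "(\<Sum>j<n. w k j * eta (d j)) < eta (q k)" unfolding q using that
      by (intro eta_jensen_strict[of "{..<n}" _ _ j])
        (simp_all add: w_def overlap_row_sum[OF u e \<open>k < n\<close>] eigenbasis_nonneg[OF eig A(3)])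
    thus False using tight[OF \<open>k < n\<close>] by simp
  qed
  have "matvec n A (e k) i = of_real (q k) * e k i" if "k < n" "i < n" for k i
  proof -
    have "matvec n A (e k) i = (\<Sum>j<n. (cinner n (u j) (e k) * of_real (d j)) * u j i)"
      by (rule matvec_eigenbasis_expand[OF eig \<open>i < n\<close>])
    also have "\<dots> = (\<Sum>j<n. of_real (q k) * (cinner n (u j) (e k) * u j i))"
      using same[OF \<open>k < n\<close>] by (intro sum.cong refl) (auto simp: w_def)
    also have "\<dots> = of_real (q k) * e k i"
      using orthonormal_expand[OF u \<open>i < n\<close>, of "e k"] by (simp add: sum_distrib_left)
    finally show ?thesis .
  qed
  with e show ?thesis unfolding eigenbasis_def q_def by blast
qed

section \<open>Strict concavity of the entropy\<close>

lemma matvec_lincomb: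
  assumes "A \<in> carrier_mat n n" "B \<in> carrier_mat n n" "i < n"
  shows "matvec n (a \<cdot>\<^sub>m A + b \<cdot>\<^sub>m B) f i = a * matvec n A f i + b * matvec n B f i"
  using assms unfolding matvec_def by (simp add: sum.distrib sum_distrib_left algebra_simps)

lemma quad_form_lincomb:
  assumes "A \<in> carrier_mat n n" "B \<in> carrier_mat n n"
  shows "quad_form n (of_real a \<cdot>\<^sub>m A + of_real b \<cdot>\<^sub>m B) f = a * quad_form n A f + b * quad_form n B f"
proof -
  have "cinner n f (matvec n (of_real a \<cdot>\<^sub>m A + of_real b \<cdot>\<^sub>m B) f) =
      cinner n f (\<lambda>i. of_real a * matvec n A f i + of_real b * matvec n B f i)"
    by (rule cinner_cong) (simp_all add: matvec_lincomb[OF assms])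
  also have "\<dots> = of_real a * cinner n f (matvec n A f) + of_real b * cinner n f (matvec n B f)"
    unfolding cinner_def by (simp add: distrib_left sum.distrib sum_distrib_left mult_ac)
  finally show ?thesis unfolding quad_form_def by simp
qed

lemma hermitian_lincomb:
  assumes "A \<in> carrier_mat n n" "B \<in> carrier_mat n n" "hermitian n A" "hermitian n B"
  shows "hermitian n (of_real a \<cdot>\<^sub>m A + of_real b \<cdot>\<^sub>m B)"
  unfolding hermitian_def
proof (intro allI impI)
  fix i j assume "i < n" "j < n"
  moreover have "A $$ (i,j) = cnj (A $$ (j,i))" "B $$ (i,j) = cnj (B $$ (j,i))"
    using assms \<open>i < n\<close> \<open>j < n\<close> unfolding hermitian_def by blast+
  ultimately show "(of_real a \<cdot>\<^sub>m A + of_real b \<cdot>\<^sub>m B) $$ (i,j) = cnj ((of_real a \<cdot>\<^sub>m A + of_real b \<cdot>\<^sub>m B) $$ (j,i))"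
    using assms(1,2) by simp
qed

lemma psd_lincomb:
  assumes "A \<in> carrier_mat n n" "B \<in> carrier_mat n n" "psd n A" "psd n B" "0 \<le> a" "0 \<le> b"
  shows "psd n (of_real a \<cdot>\<^sub>m A + of_real b \<cdot>\<^sub>m B)"
  using assms unfolding psd_def quad_form_lincomb[OF assms(1,2)] by simp

theorem vn_entropy_strictly_concave:
  assumes A: "A \<in> carrier_mat n n" "hermitian n A" "psd n A"
    and B: "B \<in> carrier_mat n n" "hermitian n B" "psd n B"
    and "A \<noteq> B" "0 < t" "t < 1"
  shows "t * vn_entropy A + (1 - t) * vn_entropy B < vn_entropy (of_real t \<cdot>\<^sub>m A + of_real (1 - t) \<cdot>\<^sub>m B)"
proof -
  let ?C = "of_real t \<cdot>\<^sub>m A + of_real (1 - t) \<cdot>\<^sub>m B"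
  have "?C \<in> carrier_mat n n" using A(1) B(1) by simp
  moreover have "hermitian n ?C" by (rule hermitian_lincomb[OF A(1) B(1) A(2) B(2)])
  moreover have "psd n ?C" by (rule psd_lincomb[OF A(1) B(1) A(3) B(3)]) (use \<open>0 < t\<close> \<open>t < 1\<close> in simp_all)
  ultimately have C: "?C \<in> carrier_mat n n" "hermitian n ?C" "psd n ?C" by blast+
  obtain e c where eig: "eigenbasis n ?C e c" using hermitian_eigenbasis_exists[OF C(1,2)] by blast
  have e: "orthonormal n e" using eig by (simp add: eigenbasis_def)
  define a where "a k = quad_form n A (e k)" for k
  define b where "b k = quad_form n B (e k)" for k
  have ab: "0 \<le> a k" "0 \<le> b k" for k using A(3) B(3) unfolding a_def b_def psd_def by auto
  define S where "S = (\<Sum>k<n. t * eta (a k) + (1 - t) * eta (b k))"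
  have HC: "vn_entropy ?C = (\<Sum>k<n. eta (t * a k + (1 - t) * b k))"
    unfolding vn_entropy_eq_sum_eta_quad_form[OF C(1) eig] quad_form_lincomb[OF A(1) B(1)] a_def b_def ..
  have HA: "vn_entropy A \<le> (\<Sum>k<n. eta (a k))" unfolding a_def by (rule vn_entropy_le_sum_eta_quad_form[OF A e])
  have HB: "vn_entropy B \<le> (\<Sum>k<n. eta (b k))" unfolding b_def by (rule vn_entropy_le_sum_eta_quad_form[OF B e])
  have S_le: "S \<le> vn_entropy ?C"
    unfolding S_def HC using ab \<open>0 < t\<close> \<open>t < 1\<close> by (intro sum_mono eta_concave) auto
  have S_eq: "S = t * (\<Sum>k<n. eta (a k)) + (1 - t) * (\<Sum>k<n. eta (b k))"
    unfolding S_def by (simp add: sum.distrib sum_distrib_left)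
  show ?thesis
  proof (rule ccontr)
    assume "\<not> ?thesis"
    hence "vn_entropy ?C \<le> t * vn_entropy A + (1 - t) * vn_entropy B" by simp
    moreover have "t * vn_entropy A \<le> t * (\<Sum>k<n. eta (a k))" "(1 - t) * vn_entropy B \<le> (1 - t) * (\<Sum>k<n. eta (b k))"
      using HA HB \<open>0 < t\<close> \<open>t < 1\<close> by simp_all
    ultimately have "t * vn_entropy A = t * (\<Sum>k<n. eta (a k))"
      "(1 - t) * vn_entropy B = (1 - t) * (\<Sum>k<n. eta (b k))" and C_tight: "vn_entropy ?C = S"
      using S_le S_eq by linarith+
    hence tight: "vn_entropy A = (\<Sum>k<n. eta (a k))" "vn_entropy B = (\<Sum>k<n. eta (b k))"
      using \<open>0 < t\<close> \<open>t < 1\<close> by simp_all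
    have eq: "(\<Sum>k<n. t * eta (a k) + (1 - t) * eta (b k)) = (\<Sum>k<n. eta (t * a k + (1 - t) * b k))"
      using C_tight unfolding HC S_def by (rule sym)
    have "a k = b k" if "k < n" for k
      by (rule sum_eta_concave_eq_imp_eq[OF _ _ _ _ _ eq]) (simp_all add: ab that \<open>0 < t\<close> \<open>t < 1\<close>)
    hence "eigenbasis n B e a"
      using eigenbasis_if_vn_entropy_eq[OF B e] tight(2) unfolding eigenbasis_def b_def by simp
    moreover have "eigenbasis n A e a"
      using eigenbasis_if_vn_entropy_eq[OF A e] tight(1) unfolding a_def .
    ultimately show False using eq_if_same_eigenbasis[OF A(1) B(1)] \<open>A \<noteq> B\<close> by blast
  qed
qed

section \<open>Maximizers on the simplex\<close>

lemma simplex_nonneg: "p \<in> simplex \<Longrightarrow> 0 \<le> p x"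
  unfolding simplex_def by simp

lemma simplex_le_one:
  assumes "p \<in> simplex" shows "p x \<le> 1"
proof -
  have "p x \<le> (\<Sum>y\<in>UNIV. p y)" using assms by (intro member_le_sum) (auto simp: simplex_nonneg)
  thus ?thesis using assms by (simp add: simplex_def)
qed

lemma simplex_convex_comb:
  assumes "p \<in> simplex" "q \<in> simplex" "0 \<le> t" "t \<le> 1"
  shows "(\<lambda>x. t * p x + (1 - t) * q x) \<in> simplex"
  using assms unfolding simplex_def by (simp add: sum.distrib sum_distrib_left[symmetric])

lemma strict_concave_on_simplex_unique_max:
  assumes "strict_concave_on simplex f"
    and p: "p \<in> simplex" "\<forall>q\<in>simplex. f q \<le> f p"
    and p': "p' \<in> simplex" "\<forall>q\<in>simplex. f q \<le> f p'"
  shows "p = p'"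
proof (rule ccontr)
  assume "p \<noteq> p'"
  define r where "r = (\<lambda>x. (1/2) * p x + (1 - 1/2) * p' x)"
  have "r \<in> simplex" unfolding r_def using p p' by (intro simplex_convex_comb) auto
  hence "f r \<le> f p" "f r \<le> f p'" using p p' by auto
  moreover have "(1/2) * f p + (1 - 1/2) * f p' < f r"
    unfolding r_def by (rule assms(1)[unfolded strict_concave_on_def, rule_format])
      (use p p' \<open>p \<noteq> p'\<close> in auto)
  ultimately show False by simp
qed

lemma strict_concave_on_diff_linear:
  assumes "strict_concave_on S f"
  shows "strict_concave_on S (\<lambda>p. f p - (\<Sum>x\<in>UNIV. c x * p x))"
  unfolding strict_concave_on_def
proof (intro ballI impI allI)
  fix p q and t :: real
  assume "p \<in> S" "q \<in> S" "p \<noteq> q" "0 < t \<and> t < 1"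
  hence less: "t * f p + (1 - t) * f q < f (\<lambda>x. t * p x + (1 - t) * q x)"
    using assms unfolding strict_concave_on_def by blast
  have "(\<Sum>x\<in>UNIV. c x * (t * p x + (1 - t) * q x)) =
        (\<Sum>x\<in>UNIV. t * (c x * p x) + (1 - t) * (c x * q x))"
    by (rule sum.cong) (simp_all add: algebra_simps)
  also have "\<dots> = t * (\<Sum>x\<in>UNIV. c x * p x) + (1 - t) * (\<Sum>x\<in>UNIV. c x * q x)"
    by (simp add: sum.distrib sum_distrib_left)
  finally show "t * (f p - (\<Sum>x\<in>UNIV. c x * p x)) + (1 - t) * (f q - (\<Sum>x\<in>UNIV. c x * q x))
      < f (\<lambda>x. t * p x + (1 - t) * q x) - (\<Sum>x\<in>UNIV. c x * (t * p x + (1 - t) * q x))"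
    using less unfolding right_diff_distrib by linarith
qed

lemma finite_Bolzano_Weierstrass:
  fixes Q :: "nat \<Rightarrow> 'a \<Rightarrow> real"
  assumes "finite X" and bounded: "\<And>n x. \<bar>Q n x\<bar> \<le> B"
  shows "\<exists>r. strict_mono r \<and> (\<forall>x\<in>X. convergent (\<lambda>n. Q (r n) x))"
  using \<open>finite X\<close>
proof (induction X rule: finite_induct)
  case empty
  show ?case by (rule exI[of _ id]) (simp add: strict_mono_def)
next
  case (insert x X)
  then obtain r where r: "strict_mono r" and conv: "\<forall>y\<in>X. convergent (\<lambda>n. Q (r n) y)" by blast
  obtain f where f: "strict_mono f" and mono: "monoseq (\<lambda>n. Q (r (f n)) x)"
    using seq_monosub[of "\<lambda>n. Q (r n) x"] by blast
  have "Bseq (\<lambda>n. Q (r (f n)) x)" by (rule BseqI'[of _ B]) (simp add: bounded)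
  hence conv_x: "convergent (\<lambda>n. Q (r (f n)) x)" using Bseq_monoseq_convergent mono by blast
  have "convergent (\<lambda>n. Q (r (f n)) y)" if "y \<in> X" for y
  proof -
    from conv that obtain l where "(\<lambda>n. Q (r n) y) \<longlonglongrightarrow> l" unfolding convergent_def by blast
    from LIMSEQ_subseq_LIMSEQ[OF this f] show ?thesis unfolding convergent_def o_def by blast
  qed
  with conv_x strict_mono_o[OF r f] show ?case
    by (intro exI[of _ "r \<circ> f"]) (auto simp: o_def)
qed

lemma simplex_seq_compact:
  fixes Q :: "nat \<Rightarrow> 'n::finite \<Rightarrow> real"
  assumes Q: "\<And>n. Q n \<in> simplex"
  obtains r p where "strict_mono r" "p \<in> simplex" "\<And>x. (\<lambda>n. Q (r n) x) \<longlonglongrightarrow> p x"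
proof -
  obtain r where r: "strict_mono r" and "\<forall>x. convergent (\<lambda>n. Q (r n) x)"
    using finite_Bolzano_Weierstrass[of UNIV Q 1] simplex_nonneg[OF Q] simplex_le_one[OF Q] by auto
  then obtain p where lim: "\<And>x. (\<lambda>n. Q (r n) x) \<longlonglongrightarrow> p x"
    unfolding convergent_def by metis
  have "0 \<le> p x" for x by (rule LIMSEQ_le_const[OF lim]) (simp add: simplex_nonneg[OF Q])
  moreover have "(\<lambda>n. \<Sum>x\<in>UNIV. Q (r n) x) \<longlonglongrightarrow> (\<Sum>x\<in>UNIV. p x)" by (intro tendsto_sum lim)
  hence "(\<Sum>x\<in>UNIV. p x) = 1" using Q unfolding simplex_def by (simp add: LIMSEQ_const_iff)
  ultimately have "p \<in> simplex" unfolding simplex_def by simp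
  with r lim show ?thesis using that by blast
qed

text \<open>The hypothesis says that \<open>f\<close> is upper semicontinuous on the simplex: at every point it is
  touched from above by a majorant that is continuous there.\<close>
lemma simplex_has_max:
  fixes f :: "('n::finite \<Rightarrow> real) \<Rightarrow> real"
  assumes envelope: "\<And>p. p \<in> simplex \<Longrightarrow> \<exists>F. (\<forall>q\<in>simplex. f q \<le> F q) \<and> F p = f p \<and>
      (\<forall>Q. (\<forall>n. Q n \<in> simplex) \<longrightarrow> (\<forall>x. (\<lambda>n. Q n x) \<longlonglongrightarrow> p x) \<longrightarrow> (\<lambda>n. F (Q n)) \<longlonglongrightarrow> F p)"
  shows "\<exists>p\<in>simplex. \<forall>q\<in>simplex. f q \<le> f p"
proof -
  have limsup: "\<exists>r p F. strict_mono r \<and> p \<in> simplex \<and> (\<forall>n. f (Q (r n)) \<le> F (Q (r n))) \<and>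
                  (\<lambda>n. F (Q (r n))) \<longlonglongrightarrow> f p"
    if Q: "\<And>n. Q n \<in> simplex" for Q :: "nat \<Rightarrow> 'n \<Rightarrow> real"
  proof -
    obtain r p where r: "strict_mono r" "p \<in> simplex" "\<And>x. (\<lambda>n. Q (r n) x) \<longlonglongrightarrow> p x"
      using simplex_seq_compact[of Q] Q by blast
    obtain F where F: "\<forall>q\<in>simplex. f q \<le> F q" "F p = f p"
      "\<forall>Q. (\<forall>n. Q n \<in> simplex) \<longrightarrow> (\<forall>x. (\<lambda>n. Q n x) \<longlonglongrightarrow> p x) \<longrightarrow> (\<lambda>n. F (Q n)) \<longlonglongrightarrow> F p"
      using envelope[OF r(2)] by blast
    have "(\<lambda>n. F (Q (r n))) \<longlonglongrightarrow> f p"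
      using F(3)[rule_format, of "\<lambda>n. Q (r n)"] F(2) Q r(3) by simp
    moreover have "\<forall>n. f (Q (r n)) \<le> F (Q (r n))" using F(1) Q by blast
    ultimately show ?thesis using r(1,2) by (intro exI[of _ r] exI[of _ p] exI[of _ F]) simp
  qed
  have bdd: "bdd_above (f ` simplex)"
  proof (rule ccontr)
    assume "\<not> bdd_above (f ` simplex)"
    hence "\<exists>q\<in>simplex. real n < f q" for n unfolding bdd_above_def by (auto simp: not_le)
    then obtain Q where Q: "\<And>n. Q n \<in> simplex" "\<And>n. real n < f (Q n)" by metis
    then obtain r p F where r: "strict_mono r" and le: "\<And>n. f (Q (r n)) \<le> F (Q (r n))"
      and lim: "(\<lambda>n. F (Q (r n))) \<longlonglongrightarrow> f p"
      using limsup by blast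
    obtain K where K: "\<And>n. norm (F (Q (r n))) \<le> K"
      using convergent_imp_Bseq[OF convergentI[OF lim]] unfolding Bseq_def by auto
    define n where "n = nat \<lceil>K\<rceil>"
    have "K \<le> real n" unfolding n_def by linarith
    also have "real n \<le> real (r n)" using seq_suble[OF r] by simp
    also have "\<dots> < F (Q (r n))" using Q(2)[of "r n"] le[of n] by linarith
    also have "\<dots> \<le> K" using K[of n] by simp
    finally show False by simp
  qed
  define S where "S = Sup (f ` simplex)"
  have "(\<lambda>x. if x = undefined then 1 else 0) \<in> simplex" unfolding simplex_def by simp
  hence nonempty: "f ` simplex \<noteq> {}" by blast
  have "\<exists>q\<in>simplex. S - inverse (Suc n) < f q" for n :: nat
    using less_cSup_iff[OF nonempty bdd, of "S - inverse (Suc n)"] unfolding S_def by simp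
  then obtain Q where Q: "\<And>n. Q n \<in> simplex" "\<And>n. S - inverse (Suc n) < f (Q n)" by metis
  then obtain r p F where r: "strict_mono r" "p \<in> simplex" and le: "\<And>n. f (Q (r n)) \<le> F (Q (r n))"
    and lim: "(\<lambda>n. F (Q (r n))) \<longlonglongrightarrow> f p"
    using limsup by blast
  have below: "S - inverse (Suc n) \<le> F (Q (r n))" for n
  proof -
    have "inverse (real (Suc (r n))) \<le> inverse (Suc n)"
      using seq_suble[OF r(1)] by (simp add: le_imp_inverse_le)
    thus ?thesis using Q(2)[of "r n"] le[of n] by linarith
  qed
  have "(\<lambda>n. S - inverse (real (Suc n))) \<longlonglongrightarrow> S - 0"
    by (intro tendsto_intros LIMSEQ_inverse_real_of_nat)
  hence "S - 0 \<le> f p" by (rule LIMSEQ_le[OF _ lim]) (use below in blast)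
  moreover have "f q \<le> S" if "q \<in> simplex" for q
    unfolding S_def using bdd that by (simp add: cSup_upper)
  ultimately show ?thesis using r(2) by force
qed

section \<open>Mixtures of density matrices\<close>

lemma density_carrier: "density m A \<Longrightarrow> A \<in> carrier_mat m m"
  unfolding density_def by simp

lemma density_hermitian:
  assumes "density m A"
  shows "hermitian m A"
  unfolding hermitian_def
proof (intro allI impI)
  fix i j assume "i < m" "j < m"
  hence "mat_adjoint A $$ (i,j) = cnj (A $$ (j,i))"
    using density_carrier[OF assms] unfolding mat_adjoint_def by (simp add: mat_of_rows_index cols_nth)
  thus "A $$ (i,j) = cnj (A $$ (j,i))" using assms unfolding density_def by simp
qed

lemma density_psd:
  assumes "density m A"
  shows "psd m A"
  unfolding psd_def
proof
  fix f :: "nat \<Rightarrow> complex"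
  have "conjugate (vec m f) \<bullet> (A *\<^sub>v vec m f) = cinner m f (matvec m A f)"
    using density_carrier[OF assms] unfolding cinner_def matvec_def scalar_prod_def
    by (simp add: lessThan_atLeast0) (intro sum.cong refl, auto simp: scalar_prod_def)
  moreover have "0 \<le> Re (conjugate (vec m f) \<bullet> (A *\<^sub>v vec m f))"
    using assms unfolding density_def by simp
  ultimately show "0 \<le> quad_form m A f" unfolding quad_form_def by simp
qed

lemma mix_carrier: "mix m \<rho> p \<in> carrier_mat m m"
  unfolding mix_def by simp

lemma index_mix: "i < m \<Longrightarrow> j < m \<Longrightarrow> mix m \<rho> p $$ (i,j) = (\<Sum>x\<in>UNIV. of_real (p x) * \<rho> x $$ (i,j))"
  unfolding mix_def by simp

lemma quad_form_mix: "quad_form m (mix m \<rho> p) f = (\<Sum>x\<in>UNIV. p x * quad_form m (\<rho> x) f)"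
proof -
  have "matvec m (mix m \<rho> p) f i = (\<Sum>x\<in>UNIV. of_real (p x) * matvec m (\<rho> x) f i)" if "i < m" for i
  proof -
    have "matvec m (mix m \<rho> p) f i = (\<Sum>j<m. \<Sum>x\<in>UNIV. of_real (p x) * (\<rho> x $$ (i,j) * f j))"
      unfolding matvec_def using that by (intro sum.cong refl) (simp add: index_mix sum_distrib_right mult.assoc)
    also have "\<dots> = (\<Sum>x\<in>UNIV. of_real (p x) * matvec m (\<rho> x) f i)"
      unfolding matvec_def by (subst sum.swap) (simp add: sum_distrib_left)
    finally show ?thesis .
  qed
  hence "cinner m f (matvec m (mix m \<rho> p) f) = cinner m f (\<lambda>i. \<Sum>x\<in>UNIV. of_real (p x) * matvec m (\<rho> x) f i)"
    by (intro cinner_cong) auto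
  thus ?thesis unfolding quad_form_def cinner_sum_right by (simp only: Re_sum) simp
qed

lemma hermitian_mix:
  assumes "\<And>x. hermitian m (\<rho> x)"
  shows "hermitian m (mix m \<rho> p)"
  unfolding hermitian_def
proof (intro allI impI)
  fix i j assume "i < m" "j < m"
  moreover have "\<rho> x $$ (i,j) = cnj (\<rho> x $$ (j,i))" for x
    using assms[of x] \<open>i < m\<close> \<open>j < m\<close> unfolding hermitian_def by blast
  ultimately show "mix m \<rho> p $$ (i,j) = cnj (mix m \<rho> p $$ (j,i))" by (simp add: index_mix)
qed

lemma psd_mix:
  assumes "\<And>x. psd m (\<rho> x)" "\<And>x. 0 \<le> p x"
  shows "psd m (mix m \<rho> p)"
  using assms unfolding psd_def quad_form_mix by (simp add: sum_nonneg)

lemma mix_convex_comb: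
  "mix m \<rho> (\<lambda>x. t * p x + (1 - t) * q x) = of_real t \<cdot>\<^sub>m mix m \<rho> p + of_real (1 - t) \<cdot>\<^sub>m mix m \<rho> q"
  by (rule eq_matI) (auto simp: mix_def sum.distrib sum_distrib_left distrib_right mult.assoc)

lemma mix_diff: "mix m \<rho> (\<lambda>x. p x - q x) = mix m \<rho> p - mix m \<rho> q"
  by (rule eq_matI) (auto simp: mix_def sum_subtractf algebra_simps)

lemma vn_entropy_mix_strictly_concave:
  assumes dens: "\<forall>x. density m (\<rho> x)"
    and lin_indep: "\<forall>c :: 'n::finite \<Rightarrow> real. mix m \<rho> c = 0\<^sub>m m m \<longrightarrow> c = (\<lambda>x. 0)"
  shows "strict_concave_on simplex (\<lambda>p. vn_entropy (mix m \<rho> p))"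
  unfolding strict_concave_on_def
proof (intro ballI impI allI)
  fix p q :: "'n \<Rightarrow> real" and t :: real
  assume "p \<in> simplex" "q \<in> simplex" "p \<noteq> q" and t: "0 < t \<and> t < 1"
  have "mix m \<rho> p \<noteq> mix m \<rho> q"
  proof
    assume "mix m \<rho> p = mix m \<rho> q"
    hence "mix m \<rho> (\<lambda>x. p x - q x) = 0\<^sub>m m m" unfolding mix_diff using minus_r_inv_mat[OF mix_carrier] by simp
    hence "(\<lambda>x. p x - q x) = (\<lambda>x. 0)" using lin_indep by blast
    thus False using \<open>p \<noteq> q\<close> by (auto simp: fun_eq_iff)
  qed
  moreover have "\<And>r. r \<in> simplex \<Longrightarrow> psd m (mix m \<rho> r)"
    using dens by (intro psd_mix density_psd) (auto simp: simplex_nonneg)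
  moreover have "\<And>r. hermitian m (mix m \<rho> r)" using dens by (intro hermitian_mix density_hermitian) auto
  ultimately show "t * vn_entropy (mix m \<rho> p) + (1 - t) * vn_entropy (mix m \<rho> q)
      < vn_entropy (mix m \<rho> (\<lambda>x. t * p x + (1 - t) * q x))"
    unfolding mix_convex_comb using t \<open>p \<in> simplex\<close> \<open>q \<in> simplex\<close>
    by (intro vn_entropy_strictly_concave) (auto intro: mix_carrier)
qed

lemma vn_entropy_mix_envelope:
  assumes dens: "\<forall>x. density m (\<rho> x)" and p: "p \<in> simplex"
  obtains F where "\<And>q. q \<in> simplex \<Longrightarrow> vn_entropy (mix m \<rho> q) \<le> F q"
    "F p = vn_entropy (mix m \<rho> p)"
    "\<And>Q. (\<And>n. Q n \<in> simplex) \<Longrightarrow> (\<And>x. (\<lambda>n. Q n x) \<longlonglongrightarrow> p x) \<Longrightarrow> (\<lambda>n. F (Q n)) \<longlonglongrightarrow> F p"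
proof -
  have herm: "hermitian m (mix m \<rho> q)" for q
    using dens by (intro hermitian_mix density_hermitian) auto
  have psd: "psd m (mix m \<rho> q)" if "q \<in> simplex" for q
    using dens that by (intro psd_mix density_psd) (auto simp: simplex_nonneg)
  obtain e l where eig: "eigenbasis m (mix m \<rho> p) e l"
    using hermitian_eigenbasis_exists[OF mix_carrier herm] by blast
  have e: "orthonormal m e" using eig by (simp add: eigenbasis_def)
  define F where "F q = (\<Sum>k<m. eta (\<Sum>x\<in>UNIV. q x * quad_form m (\<rho> x) (e k)))" for q
  have "vn_entropy (mix m \<rho> q) \<le> F q" if "q \<in> simplex" for q
    using vn_entropy_le_sum_eta_quad_form[OF mix_carrier herm psd[OF that] e]
    unfolding F_def quad_form_mix .
  moreover have "F p = vn_entropy (mix m \<rho> p)"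
    unfolding F_def vn_entropy_eq_sum_eta_quad_form[OF mix_carrier eig] quad_form_mix ..
  moreover have "(\<lambda>n. F (Q n)) \<longlonglongrightarrow> F p"
    if Q: "\<And>n. Q n \<in> simplex" and lim: "\<And>x. (\<lambda>n. Q n x) \<longlonglongrightarrow> p x" for Q
  proof -
    have "(\<lambda>n. eta (\<Sum>x\<in>UNIV. Q n x * quad_form m (\<rho> x) (e k))) \<longlonglongrightarrow> eta (\<Sum>x\<in>UNIV. p x * quad_form m (\<rho> x) (e k))"
      for k
    proof (rule tendsto_eta)
      show "0 \<le> (\<Sum>x\<in>UNIV. Q n x * quad_form m (\<rho> x) (e k))" for n
        using dens Q density_psd unfolding psd_def by (auto intro!: sum_nonneg simp: simplex_nonneg)
    qed (intro tendsto_intros lim)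
    thus ?thesis unfolding F_def by (intro tendsto_sum)
  qed
  ultimately show ?thesis using that by blast
qed

lemma vn_entropy_mix_minus_linear_has_max:
  fixes \<rho> :: "'n::finite \<Rightarrow> complex mat"
  assumes dens: "\<forall>x. density m (\<rho> x)"
  shows "\<exists>p\<in>simplex. \<forall>q\<in>simplex. vn_entropy (mix m \<rho> q) - (\<Sum>x\<in>UNIV. c x * q x)
                                 \<le> vn_entropy (mix m \<rho> p) - (\<Sum>x\<in>UNIV. c x * p x)"
proof (rule simplex_has_max)
  fix p :: "'n \<Rightarrow> real" assume "p \<in> simplex"
  then obtain F where F: "\<And>q. q \<in> simplex \<Longrightarrow> vn_entropy (mix m \<rho> q) \<le> F q"
    "F p = vn_entropy (mix m \<rho> p)"
    "\<And>Q. (\<And>n. Q n \<in> simplex) \<Longrightarrow> (\<And>x. (\<lambda>n. Q n x) \<longlonglongrightarrow> p x) \<Longrightarrow> (\<lambda>n. F (Q n)) \<longlonglongrightarrow> F p"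
    using vn_entropy_mix_envelope[OF dens] by blast
  show "\<exists>G. (\<forall>q\<in>simplex. vn_entropy (mix m \<rho> q) - (\<Sum>x\<in>UNIV. c x * q x) \<le> G q) \<and>
      G p = vn_entropy (mix m \<rho> p) - (\<Sum>x\<in>UNIV. c x * p x) \<and>
      (\<forall>Q. (\<forall>n. Q n \<in> simplex) \<longrightarrow> (\<forall>x. (\<lambda>n. Q n x) \<longlonglongrightarrow> p x) \<longrightarrow> (\<lambda>n. G (Q n)) \<longlonglongrightarrow> G p)"
    using F by (intro exI[of _ "\<lambda>q. F q - (\<Sum>x\<in>UNIV. c x * q x)"]) (auto intro!: tendsto_intros)
qed

theorem theorem5:
  fixes \<rho> :: "'n::finite \<Rightarrow> complex mat" and m :: nat and s :: "'n \<Rightarrow> real"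
  assumes dens: "\<forall>x. density m (\<rho> x)"
    and s_nonneg: "\<forall>x. 0 \<le> s x"
    and lin_indep: "\<forall>c :: 'n \<Rightarrow> real. mix m \<rho> c = 0\<^sub>m m m \<longrightarrow> c = (\<lambda>x. 0)"
  shows "\<forall>lam :: real. 0 \<le> lam \<longrightarrow>
           strict_concave_on simplex (\<lambda>p. holevo m \<rho> p - lam * (\<Sum>x\<in>UNIV. s x * p x)) \<and>
           (\<exists>!p. p \<in> simplex \<and>
              (\<forall>q\<in>simplex. holevo m \<rho> q - lam * (\<Sum>x\<in>UNIV. s x * q x)
                            \<le> holevo m \<rho> p - lam * (\<Sum>x\<in>UNIV. s x * p x)))"
proof (intro allI impI)
  fix lam :: real
  define c where "c x = vn_entropy (\<rho> x) + lam * s x" for x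
  define g where "g p = vn_entropy (mix m \<rho> p) - (\<Sum>x\<in>UNIV. c x * p x)" for p
  have objective: "holevo m \<rho> p - lam * (\<Sum>x\<in>UNIV. s x * p x) = g p" for p
    by (simp add: g_def holevo_def c_def algebra_simps sum.distrib sum_distrib_left)
  have concave: "strict_concave_on simplex g"
    unfolding g_def by (rule strict_concave_on_diff_linear[OF vn_entropy_mix_strictly_concave[OF dens lin_indep]])
  obtain p where "p \<in> simplex" "\<forall>q\<in>simplex. g q \<le> g p"
    using vn_entropy_mix_minus_linear_has_max[OF dens] unfolding g_def by blast
  with strict_concave_on_simplex_unique_max[OF concave]
  have "\<exists>!p. p \<in> simplex \<and> (\<forall>q\<in>simplex. g q \<le> g p)" by blast
  with concave show "strict_concave_on simplex (\<lambda>p. holevo m \<rho> p - lam * (\<Sum>x\<in>UNIV. s x * p x)) \<and>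
      (\<exists>!p. p \<in> simplex \<and> (\<forall>q\<in>simplex. holevo m \<rho> q - lam * (\<Sum>x\<in>UNIV. s x * q x)
                                   \<le> holevo m \<rho> p - lam * (\<Sum>x\<in>UNIV. s x * p x)))"
    unfolding objective by simp
qed

end
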